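(* Let $G=(V,E)$ be an unweighted graph, i.e. $w(u,v)=1$ if $(u,v)\in E$ and $w(u,v)=0$ otherwise. Then $G$ is a ground-truth input if and only if each connected component of $G$ is a clique.
   Context: $G$ is a ground-truth input if there exist an ultrametric $d$ on $V$ (a metric with $d(x,y)\le\max\{d(x,z),d(y,z)\}$ for all $x,y,z\in V$) and a non-increasing function $f:\mathbb{R}_+\to\mathbb{R}_+$ such that $w(x,y)=f(d(x,y))$ for all distinct $x,y\in V$. *)

theory Defs
  imports Main "HOL-Library.Extended_Real" Complex_Main
begin

definition ultrametric_on :: "'a set \<Rightarrow> ('a \<Rightarrow> 'a \<Rightarrow> real) \<Rightarrow> bool" where
  "ultrametric_on V d \<longleftrightarrow>
     (\<forall>x\<in>V. \<forall>y\<in>V. d x y \<ge> 0) \<and>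
     (\<forall>x\<in>V. \<forall>y\<in>V. d x y = 0 \<longleftrightarrow> x = y) \<and>
     (\<forall>x\<in>V. \<forall>y\<in>V. d x y = d y x) \<and>
     (\<forall>x\<in>V. \<forall>y\<in>V. \<forall>z\<in>V. d x y \<le> d x z + d z y) \<and>
     (\<forall>x\<in>V. \<forall>y\<in>V. \<forall>z\<in>V. d x y \<le> max (d x z) (d y z))"

definition ground_truth_input :: "'a set \<Rightarrow> ('a \<Rightarrow> 'a \<Rightarrow> real) \<Rightarrow> bool" where
  "ground_truth_input V w \<longleftrightarrow>
     (\<exists>d f. ultrametric_on V d \<and>
        (\<forall>t\<ge>0. f t \<ge> (0::real)) \<and>
        (\<forall>s t. 0 \<le> s \<and> s \<le> t \<longrightarrow> f t \<le> f s) \<and>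
        (\<forall>x\<in>V. \<forall>y\<in>V. x \<noteq> y \<longrightarrow> w x y = f (d x y)))"

definition simple_graph :: "'a set \<Rightarrow> ('a \<times> 'a) set \<Rightarrow> bool" where
  "simple_graph V E \<longleftrightarrow> finite V \<and> E \<subseteq> V \<times> V \<and> sym E \<and> irrefl E"

definition unweighted :: "('a \<times> 'a) set \<Rightarrow> 'a \<Rightarrow> 'a \<Rightarrow> real" where
  "unweighted E u v = (if (u, v) \<in> E then 1 else 0)"

definition connected_component_of :: "('a \<times> 'a) set \<Rightarrow> 'a \<Rightarrow> 'a set" where
  "connected_component_of E v = {u. (v, u) \<in> E\<^sup>*}"

definition is_clique :: "('a \<times> 'a) set \<Rightarrow> 'a set \<Rightarrow> bool" where
  "is_clique E C \<longleftrightarrow> (\<forall>x\<in>C. \<forall>y\<in>C. x \<noteq> y \<longrightarrow> (x, y) \<in> E)"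

end

theory Submission
  imports Defs
begin

text \<open>Adjacency is determined by the distance through the non-increasing 0/1-valued function f,
  so adjacent pairs are exactly the distinct pairs at "small" distance. By the strong triangle
  inequality, two vertices adjacent to a common neighbour are again at small distance, i.e.
  adjacency together with equality is an equivalence relation, whose classes are the connected
  components. Conversely, for such an equivalence relation the distance 1 inside a class and 2
  across classes is an ultrametric, and f t = (if t \<le> 1 then 1 else 0) recovers the graph.\<close>

lemma rtrancl_eq_reflcl_if_trans_reflcl:
  assumes "trans (R\<^sup>=)"
  shows "R\<^sup>* = R\<^sup>="
proof -
  have "R\<^sup>* = (R\<^sup>=)\<^sup>*" by simp
  also have "\<dots> = ((R\<^sup>=)\<^sup>+)\<^sup>=" by (rule rtrancl_trancl_reflcl)
  also have "\<dots> = R\<^sup>=" by (simp only: trancl_id[OF assms]) auto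
  finally show ?thesis .
qed

lemma trans_reflcl_if_ground_truth_input:
  assumes "E \<subseteq> V \<times> V" and "ground_truth_input V (unweighted E)"
  shows "trans (E\<^sup>=)"
proof (rule transI)
  fix a b c assume ab: "(a, b) \<in> E\<^sup>=" and bc: "(b, c) \<in> E\<^sup>="
  from assms(2) obtain d f where d: "ultrametric_on V d"
    and f_mono: "\<forall>s t. 0 \<le> s \<and> s \<le> t \<longrightarrow> f t \<le> f s"
    and w: "\<forall>x\<in>V. \<forall>y\<in>V. x \<noteq> y \<longrightarrow> unweighted E x y = f (d x y)"
    unfolding ground_truth_input_def by blast
  show "(a, c) \<in> E\<^sup>="
  proof (cases "a = b \<or> b = c \<or> a = c")
    case False
    then have "(a, b) \<in> E" "(b, c) \<in> E" using ab bc by auto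
    then have V: "a \<in> V" "b \<in> V" "c \<in> V" using assms(1) by auto
    have "f (d a b) = 1" "f (d c b) = 1"
      using w V False \<open>(a, b) \<in> E\<close> \<open>(b, c) \<in> E\<close> d
      unfolding unweighted_def ultrametric_on_def by (metis (no_types, lifting))+
    then have "f (max (d a b) (d c b)) = 1" by (simp add: max_def)
    moreover have "0 \<le> d a c" "d a c \<le> max (d a b) (d c b)"
      using d V unfolding ultrametric_on_def by auto
    ultimately have "1 \<le> f (d a c)" using f_mono by metis
    then have "1 \<le> unweighted E a c" using w V False by metis
    then show ?thesis unfolding unweighted_def by (auto split: if_splits)
  qed (use ab bc in auto)
qed

lemma is_clique_component_if_trans_reflcl:
  assumes "sym E" and "trans (E\<^sup>=)"
  shows "is_clique E (connected_component_of E v)"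
  unfolding is_clique_def connected_component_of_def
proof (intro ballI impI)
  fix x y assume "x \<in> {u. (v, u) \<in> E\<^sup>*}" "y \<in> {u. (v, u) \<in> E\<^sup>*}" "x \<noteq> y"
  then have "(v, x) \<in> E\<^sup>=" "(v, y) \<in> E\<^sup>="
    using rtrancl_eq_reflcl_if_trans_reflcl[OF assms(2)] by auto
  moreover have "sym (E\<^sup>=)" using assms(1) by (simp add: sym_Id sym_Un)
  ultimately have "(x, y) \<in> E\<^sup>=" using assms(2) by (meson symD transD)
  with \<open>x \<noteq> y\<close> show "(x, y) \<in> E" by simp
qed

lemma trans_reflcl_if_components_cliques:
  assumes "E \<subseteq> V \<times> V" and "\<forall>v\<in>V. is_clique E (connected_component_of E v)"
  shows "trans (E\<^sup>=)"
proof (rule transI)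
  fix a b c assume ab: "(a, b) \<in> E\<^sup>=" and bc: "(b, c) \<in> E\<^sup>="
  show "(a, c) \<in> E\<^sup>="
  proof (cases "a = b \<or> b = c")
    case False
    then have "(a, b) \<in> E" "(b, c) \<in> E" using ab bc by auto
    then have "a \<in> V" "a \<in> connected_component_of E a" "c \<in> connected_component_of E a"
      using assms(1) unfolding connected_component_of_def by auto
    then show ?thesis using assms(2) unfolding is_clique_def by blast
  qed (use ab bc in auto)
qed

definition edge_distance :: "('a \<times> 'a) set \<Rightarrow> 'a \<Rightarrow> 'a \<Rightarrow> real" where
  "edge_distance E x y = (if x = y then 0 else if (x, y) \<in> E then 1 else 2)"

lemma ultrametric_on_edge_distance:
  assumes "sym E" and "trans (E\<^sup>=)"
  shows "ultrametric_on V (edge_distance E)"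
proof -
  have E_sym: "(x, y) \<in> E \<longleftrightarrow> (y, x) \<in> E" for x y
    using assms(1) by (auto dest: symD)
  have E_trans: "(x, y) \<in> E" if "(x, z) \<in> E" "(y, z) \<in> E" "x \<noteq> y" for x y z
    using that assms(2) E_sym by (auto dest: transD)
  show ?thesis
    unfolding ultrametric_on_def
  proof (intro conjI ballI)
    fix x y z
    show "edge_distance E x y \<le> max (edge_distance E x z) (edge_distance E y z)"
      unfolding edge_distance_def using E_trans[of x z y] E_sym[of x z] E_sym[of y z] by auto
  qed (auto simp: edge_distance_def E_sym)
qed

lemma ground_truth_input_if_trans_reflcl:
  assumes "sym E" and "trans (E\<^sup>=)"
  shows "ground_truth_input V (unweighted E)"
  unfolding ground_truth_input_def
proof (intro exI conjI)
  let ?f = "\<lambda>t::real. if t \<le> 1 then 1 else 0 :: real"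
  show "ultrametric_on V (edge_distance E)"
    using assms by (rule ultrametric_on_edge_distance)
  show "\<forall>t\<ge>0. ?f t \<ge> 0" "\<forall>s t. 0 \<le> s \<and> s \<le> t \<longrightarrow> ?f t \<le> ?f s"
    by auto
  show "\<forall>x\<in>V. \<forall>y\<in>V. x \<noteq> y \<longrightarrow> unweighted E x y = ?f (edge_distance E x y)"
    by (simp add: unweighted_def edge_distance_def)
qed

theorem proposition1:
  assumes "simple_graph V E"
  shows "ground_truth_input V (unweighted E) \<longleftrightarrow>
         (\<forall>v\<in>V. is_clique E (connected_component_of E v))"
proof -
  have E: "E \<subseteq> V \<times> V" "sym E" using assms unfolding simple_graph_def by auto
  have "ground_truth_input V (unweighted E) \<longleftrightarrow> trans (E\<^sup>=)"
    using trans_reflcl_if_ground_truth_input[OF E(1)]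
      ground_truth_input_if_trans_reflcl[OF E(2)] by (rule iffI)
  also have "\<dots> \<longleftrightarrow> (\<forall>v\<in>V. is_clique E (connected_component_of E v))"
    using is_clique_component_if_trans_reflcl[OF E(2)] trans_reflcl_if_components_cliques[OF E(1)] by (intro iffI ballI)
  finally show ?thesis .
qed

end
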